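(* Let $m\ge 3$ and let $K\subset\mathbb{R}^m$ be a self-dual, smooth, strictly convex cone. Then there is no proper cone $L\subset\mathbb{R}^m$ such that $K$ is an $L$-isotone projection set.
   Context: $\mathbb{R}^m$ carries the standard inner product. A proper cone is a closed convex cone $K$ that is pointed ($K\cap(-K)=\{0\}$) and generating ($K-K=\mathbb{R}^m$). The dual cone is $K^*=\{y:\langle x,y\rangle\ge0\ \forall x\in K\}$; $K$ is self-dual if $K=K^*$. For $u\neq 0$, $H(u,0)=\{x:\langle u,x\rangle=0\}$ and $H_-(u,0)=\{x:\langle u,x\rangle\le0\}$; $H(u,0)$ is a supporting hyperplane of $K$ if $K\subset H_-(u,0)$. A proper cone $K$ is strictly convex if $\dim(K\cap H(u,0))\le1$ for every supporting hyperplane $H(u,0)$ of $K$; a strictly convex proper cone is smooth if through each boundary point $x\neq0$ of $K$ there is exactly one supporting hyperplane. For a cone $L$, $x\le_L y$ means $y-x\in L$; $P_K$ is the metric projection onto $K$, and $K$ is an $L$-isotone projection set if $x\le_L y$ implies $P_Kx\le_L P_Ky$. *)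

theory Defs
  imports "HOL-Analysis.Analysis"
begin

definition proper_cone :: "'a::euclidean_space set \<Rightarrow> bool" where
  "proper_cone K \<longleftrightarrow> closed K \<and> convex_cone K \<and>
     K \<inter> uminus ` K = {0} \<and> {x - y | x y. x \<in> K \<and> y \<in> K} = UNIV"

definition dual_cone :: "'a::euclidean_space set \<Rightarrow> 'a set" where
  "dual_cone K = {y. \<forall>x\<in>K. inner x y \<ge> 0}"

definition self_dual :: "'a::euclidean_space set \<Rightarrow> bool" where
  "self_dual K \<longleftrightarrow> K = dual_cone K"

definition supporting_hyperplane :: "'a::euclidean_space set \<Rightarrow> 'a \<Rightarrow> bool" where
  "supporting_hyperplane K u \<longleftrightarrow> u \<noteq> 0 \<and> K \<subseteq> {x. inner u x \<le> 0}"

definition strictly_convex_cone :: "'a::euclidean_space set \<Rightarrow> bool" where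
  "strictly_convex_cone K \<longleftrightarrow> proper_cone K \<and>
     (\<forall>u. supporting_hyperplane K u \<longrightarrow> aff_dim (K \<inter> {x. inner u x = 0}) \<le> 1)"

text \<open>through each boundary point x \<noteq> 0 there is exactly one supporting hyperplane
  (hyperplanes counted as sets)\<close>
definition smooth_cone :: "'a::euclidean_space set \<Rightarrow> bool" where
  "smooth_cone K \<longleftrightarrow> strictly_convex_cone K \<and>
     (\<forall>x\<in>frontier K. x \<noteq> 0 \<longrightarrow>
        (\<exists>!H. \<exists>u. supporting_hyperplane K u \<and> H = {z. inner u z = 0} \<and> x \<in> H))"

definition isotone_projection_set :: "'a::euclidean_space set \<Rightarrow> 'a set \<Rightarrow> bool" where
  "isotone_projection_set L K \<longleftrightarrow>
     (\<forall>x y. y - x \<in> L \<longrightarrow> closest_point K y - closest_point K x \<in> L)"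

end

theory Submission
  imports Defs
begin

text \<open>
  For a nonzero boundary point \<open>p\<close> of \<open>K\<close>, self-duality and smoothness give a nonzero boundary
  point \<open>x \<bottom> p\<close> whose feasible directions are dense in the half-space \<open>\<langle>p, \<cdot>\<rangle> \<ge> 0\<close>. As \<open>P\<^sub>K\<close>
  fixes \<open>x - s p\<close> for \<open>s \<ge> 0\<close>, isotonicity puts the rescaled projections \<open>(P\<^sub>K(x + t y) - x) / t\<close>
  into \<open>L\<close>; for \<open>y\<close> on the side of \<open>p\<^sup>\<bottom>\<close> away from \<open>K\<close> they approach the orthogonal
  projection of \<open>y\<close> onto \<open>p\<^sup>\<bottom>\<close> as \<open>t \<rightarrow> 0\<close>. So \<open>L\<close> is invariant under that projection.

  Hence the point of least norm in \<open>L \<inter> {\<langle>v, \<cdot>\<rangle> = c}\<close>, \<open>c > 0\<close>, is orthogonal to every boundary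
  point orthogonal to \<open>v\<close>. If \<open>v \<bottom> k\<close> for an interior point \<open>k\<close>, these include the two points
  where the line \<open>k + t d\<close> leaves \<open>K\<close>, for each \<open>d \<bottom> k, v\<close>; as \<open>m \<ge> 3\<close>, this forces that
  point to be a positive multiple of \<open>v\<close>, so \<open>v \<in> L\<close>. Thus every \<open>g \<bottom> k\<close> has \<open>g \<in> L\<close> or
  \<open>-g \<in> L\<close>. For orthogonal \<open>e, f \<bottom> k\<close> with \<open>\<plusminus>e, \<plusminus>f\<close> in \<open>L\<close>, the vector
  \<open>v = (\<plusminus>e) - (\<plusminus>f)\<close> then lies in \<open>L\<close> together with \<open>-v\<close>, contradicting pointedness.
\<close>

section \<open>Proper and self-dual cones\<close>

lemma proper_coneD:
  assumes "proper_cone K"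
  shows "closed K" and "convex K" and "conic K" and "0 \<in> K"
    and "x \<in> K \<Longrightarrow> -x \<in> K \<Longrightarrow> x = 0"
    and "\<exists>a\<in>K. \<exists>b\<in>K. y = a - b"
proof -
  have K: "closed K" "convex_cone K" "K \<inter> uminus ` K = {0}"
    "{x - y | x y. x \<in> K \<and> y \<in> K} = UNIV"
    using assms unfolding proper_cone_def by auto
  show "closed K" "convex K" "conic K" "0 \<in> K"
    using K(1-3) unfolding convex_cone_def by auto
  show "x = 0" if "x \<in> K" "-x \<in> K"
  proof -
    have "x \<in> uminus ` K"
      using that(2) by (metis image_eqI minus_minus)
    with that(1) K(3) show ?thesis
      by auto
  qed
  have "y \<in> {x - y | x y. x \<in> K \<and> y \<in> K}"
    using K(4) by simp
  then show "\<exists>a\<in>K. \<exists>b\<in>K. y = a - b"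
    by blast
qed

lemma smooth_cone_imp_proper_cone: "smooth_cone K \<Longrightarrow> proper_cone K"
  unfolding smooth_cone_def strictly_convex_cone_def by blast

lemma self_dual_mem_iff: "self_dual K \<Longrightarrow> k \<in> K \<longleftrightarrow> (\<forall>y\<in>K. 0 \<le> inner y k)"
  unfolding self_dual_def dual_cone_def by blast

lemma proper_cone_interior_nonzero:
  fixes K :: "'a::euclidean_space set"
  assumes "proper_cone K"
  obtains k where "k \<in> interior K" "k \<noteq> 0"
proof -
  have "span K = UNIV"
    using proper_coneD(6)[OF assms] by (metis UNIV_eq_I span_base span_diff)
  moreover have "affine hull K = span K"
    using proper_coneD(4)[OF assms] by (simp add: affine_hull_span_0 hull_inc)
  ultimately have "rel_interior K = interior K"
    by (simp add: rel_interior_interior)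
  moreover have "rel_interior K \<noteq> {}"
    using proper_coneD(2,4)[OF assms] rel_interior_eq_empty by blast
  ultimately have "interior K \<noteq> {}"
    by simp
  moreover have "interior K \<noteq> {0}"
    using not_open_singleton open_interior by metis
  ultimately obtain k where "k \<in> interior K" "k \<noteq> 0"
    by blast
  then show thesis
    by (rule that)
qed

lemma inner_pos_if_interior_dual_cone:
  fixes K :: "'a::euclidean_space set"
  assumes "x \<in> interior K" "p \<in> dual_cone K" "p \<noteq> 0"
  shows "0 < inner p x"
proof -
  obtain e where "e > 0" "ball x e \<subseteq> K"
    using assms(1) mem_interior by blast
  define c where "c = e / 2 / norm p"
  have "dist x (x - c *\<^sub>R p) = e / 2"
    using \<open>e > 0\<close> assms(3) by (simp add: dist_norm c_def)
  then have "x - c *\<^sub>R p \<in> K"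
    using \<open>e > 0\<close> \<open>ball x e \<subseteq> K\<close> by (simp add: subset_iff)
  then have "0 \<le> inner (x - c *\<^sub>R p) p"
    using assms(2) unfolding dual_cone_def by blast
  also have "\<dots> = inner p x - c * inner p p"
    by (simp add: inner_diff_left inner_diff_right inner_commute)
  also have "c * inner p p = e / 2 * norm p"
    using assms(3) by (simp add: c_def dot_square_norm power2_eq_square)
  finally have "e / 2 * norm p \<le> inner p x"
    by simp
  moreover have "0 < e / 2 * norm p"
    using \<open>e > 0\<close> assms(3) by simp
  ultimately show ?thesis
    by linarith
qed

lemma self_dual_ray_leaves:
  fixes K :: "'a::euclidean_space set"
  assumes "self_dual K" "k \<in> interior K" "d \<noteq> 0" "inner d k = 0"
  obtains t where "0 < t" "k + t *\<^sub>R d \<notin> K"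
proof -
  obtain e where "e > 0" "ball k e \<subseteq> K"
    using assms(2) mem_interior by blast
  define c where "c = e / 2 / norm d"
  define t where "t = (inner k k + 1) / (c * inner d d)"
  have "c > 0" "inner d d > 0"
    using \<open>e > 0\<close> assms(3) by (auto simp: c_def)
  then have "t > 0"
    by (simp add: t_def add_nonneg_pos)
  have "dist k (k - c *\<^sub>R d) = e / 2"
    using \<open>e > 0\<close> assms(3) by (simp add: dist_norm c_def)
  then have "k - c *\<^sub>R d \<in> K"
    using \<open>e > 0\<close> \<open>ball k e \<subseteq> K\<close> by (simp add: subset_iff)
  moreover have "inner (k - c *\<^sub>R d) (k + t *\<^sub>R d) = inner k k - t * (c * inner d d)"
    using assms(4) by (simp add: inner_diff_left inner_add_right inner_commute algebra_simps)
  moreover have "t * (c * inner d d) = inner k k + 1"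
    using \<open>c > 0\<close> \<open>inner d d > 0\<close> by (simp add: t_def)
  ultimately have "inner (k - c *\<^sub>R d) (k + t *\<^sub>R d) < 0"
    by simp
  then have "k + t *\<^sub>R d \<notin> K"
    using self_dual_mem_iff[OF assms(1)] \<open>k - c *\<^sub>R d \<in> K\<close> by (metis linorder_not_le)
  with \<open>t > 0\<close> show thesis
    using that by blast
qed

lemma self_dual_ray_frontier:
  fixes K :: "'a::euclidean_space set"
  assumes "self_dual K" "k \<in> interior K" "d \<noteq> 0" "inner d k = 0"
  obtains t where "0 < t" "k + t *\<^sub>R d \<in> frontier K"
proof -
  obtain t where "0 < t" "k + t *\<^sub>R d \<notin> K"
    using self_dual_ray_leaves[OF assms] .
  define S where "S = (\<lambda>s. k + s *\<^sub>R d) ` {0..t}"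
  have "connected S"
    unfolding S_def by (intro connected_continuous_image continuous_intros) simp
  moreover have "k \<in> S"
    using \<open>0 < t\<close> unfolding S_def by (auto intro!: image_eqI[of _ _ 0])
  moreover have "k + t *\<^sub>R d \<in> S"
    using \<open>0 < t\<close> unfolding S_def by auto
  moreover have "k \<in> K"
    using assms(2) interior_subset by blast
  ultimately have "S \<inter> frontier K \<noteq> {}"
    using \<open>k + t *\<^sub>R d \<notin> K\<close> by (intro connected_Int_frontier) auto
  then obtain s where "s \<in> {0..t}" and s: "k + s *\<^sub>R d \<in> frontier K"
    unfolding S_def by blast
  moreover have "s \<noteq> 0"
    using s assms(2) by (auto simp: frontier_def)
  ultimately have "0 < s"
    by simp
  with s show thesis
    using that by blast
qed

lemma self_dual_orthogonal_if_orthogonal_line_exits: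
  fixes K :: "'a::euclidean_space set"
  assumes "self_dual K" "k \<in> interior K" "d \<noteq> 0" "inner d k = 0"
    and "\<And>t. k + t *\<^sub>R d \<in> frontier K \<Longrightarrow> inner (k + t *\<^sub>R d) z = 0"
  shows "inner k z = 0" "inner d z = 0"
proof -
  obtain t1 where "0 < t1" "k + t1 *\<^sub>R d \<in> frontier K"
    using self_dual_ray_frontier[OF assms(1-4)] .
  moreover obtain t2 where "0 < t2" "k + t2 *\<^sub>R (- d) \<in> frontier K"
    using self_dual_ray_frontier[OF assms(1,2), of "- d"] assms(3,4) by auto
  ultimately have "inner k z + t1 * inner d z = 0" "inner k z - t2 * inner d z = 0"
    using assms(5)[of t1] assms(5)[of "- t2"] by (simp_all add: inner_add_left inner_diff_left)
  then have "(t1 + t2) * inner d z = 0"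
    by (simp add: distrib_right)
  with \<open>0 < t1\<close> \<open>0 < t2\<close> show "inner d z = 0"
    by simp
  with \<open>inner k z + t1 * inner d z = 0\<close> show "inner k z = 0"
    by simp
qed

section \<open>Projections and orthogonality\<close>

lemma closest_point_eqI:
  fixes S :: "'a::euclidean_space set"
  assumes "convex S" "closed S" "x \<in> S" "\<And>z. z \<in> S \<Longrightarrow> inner (a - x) (z - x) \<le> 0"
  shows "closest_point S a = x"
proof -
  have "dist a x \<le> dist a z" if "z \<in> S" for z
  proof -
    have "inner (a - z) (a - z) = inner (a - x) (a - x) - 2 * inner (a - x) (z - x) + inner (z - x) (z - x)"
      by (simp add: inner_diff_left inner_diff_right inner_commute algebra_simps)
    then have "inner (a - x) (a - x) \<le> inner (a - z) (a - z)"
      using assms(4)[OF that] inner_ge_zero[of "z - x"] by linarith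
    then show ?thesis
      by (simp add: dist_norm norm_le)
  qed
  then show ?thesis
    using closest_point_unique[OF assms(1-3)] by auto
qed

lemma closest_point_diff_normal:
  fixes S :: "'a::euclidean_space set"
  assumes "convex S" "closed S" "x \<in> S" "\<And>z. z \<in> S \<Longrightarrow> inner p x \<le> inner p z" "0 \<le> s"
  shows "closest_point S (x - s *\<^sub>R p) = x"
proof (rule closest_point_eqI[OF assms(1-3)])
  fix z assume "z \<in> S"
  have "inner (x - s *\<^sub>R p - x) (z - x) = - s * (inner p z - inner p x)"
    by (simp add: inner_diff_right algebra_simps)
  also have "\<dots> \<le> 0"
    using assms(4)[OF \<open>z \<in> S\<close>] \<open>0 \<le> s\<close> by simp
  finally show "inner (x - s *\<^sub>R p - x) (z - x) \<le> 0" .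
qed

lemma closest_point_rescaled_le:
  fixes S :: "'a::euclidean_space set"
  assumes "closed S" "x + t *\<^sub>R w \<in> S" "0 < t"
  shows "norm (y - (1 / t) *\<^sub>R (closest_point S (x + t *\<^sub>R y) - x)) \<le> norm (y - w)"
proof -
  have "dist (x + t *\<^sub>R y) (closest_point S (x + t *\<^sub>R y)) \<le> dist (x + t *\<^sub>R y) (x + t *\<^sub>R w)"
    using closest_point_le[OF assms(1,2)] .
  moreover have "x + t *\<^sub>R y - closest_point S (x + t *\<^sub>R y)
      = t *\<^sub>R (y - (1 / t) *\<^sub>R (closest_point S (x + t *\<^sub>R y) - x))"
    using \<open>0 < t\<close> by (simp add: algebra_simps)
  ultimately show ?thesis
    using \<open>0 < t\<close> by (simp add: dist_norm algebra_simps flip: scaleR_diff_right)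
qed

lemma min_norm_point_orthogonal:
  fixes A :: "'a::euclidean_space set"
  defines "z \<equiv> closest_point A 0"
  assumes "closed A" "z - (inner w z / inner w w) *\<^sub>R w \<in> A"
  shows "inner w z = 0"
proof (cases "w = 0")
  case False
  define c where "c = inner w z / inner w w"
  have "inner w w > 0"
    using False by simp
  have "norm z \<le> norm (z - c *\<^sub>R w)"
    using closest_point_le[OF assms(2,3), where a = 0] by (simp add: z_def c_def)
  then have "inner z z \<le> inner (z - c *\<^sub>R w) (z - c *\<^sub>R w)"
    by (simp add: norm_le)
  also have "\<dots> = inner z z - c * inner w z"
    using \<open>inner w w > 0\<close> by (simp add: c_def inner_diff_left inner_diff_right inner_commute algebra_simps)
  finally have "inner w z * inner w z / inner w w \<le> 0"
    by (simp add: c_def)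
  then have "inner w z * inner w z \<le> 0"
    using \<open>inner w w > 0\<close> by (simp add: divide_le_0_iff)
  then show ?thesis
    by (metis antisym mult_eq_0_iff zero_le_square)
qed simp

lemma norm_diff_sq_le_halfspace:
  fixes h p z :: "'a::real_inner"
  assumes "inner p h = 0" "0 \<le> a" "0 \<le> inner p z"
  shows "(norm (h - z))\<^sup>2 + (norm (a *\<^sub>R p))\<^sup>2 \<le> (norm (h - a *\<^sub>R p - z))\<^sup>2"
proof -
  have "(norm (h - a *\<^sub>R p - z))\<^sup>2 = (norm (h - z))\<^sup>2 + (norm (a *\<^sub>R p))\<^sup>2 + 2 * a * inner p z"
    unfolding power2_norm_eq_inner
    using assms(1) by (simp add: inner_diff_left inner_diff_right inner_commute algebra_simps)
  then show ?thesis
    using assms(2,3) by simp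
qed

lemma mem_closure_if_dominated:
  fixes h y :: "'a::real_normed_vector"
  assumes "h \<in> closure T"
    and "\<And>w. w \<in> T \<Longrightarrow> \<exists>z\<in>L. (norm (h - z))\<^sup>2 + (norm (y - h))\<^sup>2 \<le> (norm (y - w))\<^sup>2"
  shows "h \<in> closure L"
proof -
  obtain w where w: "\<And>n. w n \<in> T" and "w \<longlonglongrightarrow> h"
    using assms(1) unfolding closure_sequential by blast
  have "\<forall>n. \<exists>z. z \<in> L \<and> (norm (h - z))\<^sup>2 \<le> (norm (y - w n))\<^sup>2 - (norm (y - h))\<^sup>2"
  proof
    fix n
    obtain z where "z \<in> L" "(norm (h - z))\<^sup>2 + (norm (y - h))\<^sup>2 \<le> (norm (y - w n))\<^sup>2"
      using assms(2)[OF w] by blast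
    then show "\<exists>z. z \<in> L \<and> (norm (h - z))\<^sup>2 \<le> (norm (y - w n))\<^sup>2 - (norm (y - h))\<^sup>2"
      by (intro exI[of _ z]) simp
  qed
  from choice[OF this] obtain z where z: "\<And>n. z n \<in> L"
    and le: "\<And>n. (norm (h - z n))\<^sup>2 \<le> (norm (y - w n))\<^sup>2 - (norm (y - h))\<^sup>2"
    by blast
  have "(\<lambda>n. sqrt ((norm (y - w n))\<^sup>2 - (norm (y - h))\<^sup>2))
      \<longlonglongrightarrow> sqrt ((norm (y - h))\<^sup>2 - (norm (y - h))\<^sup>2)"
    by (intro tendsto_intros \<open>w \<longlonglongrightarrow> h\<close>)
  then have lim: "(\<lambda>n. sqrt ((norm (y - w n))\<^sup>2 - (norm (y - h))\<^sup>2)) \<longlonglongrightarrow> 0"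
    by simp
  have "\<forall>n. norm (z n - h) \<le> sqrt ((norm (y - w n))\<^sup>2 - (norm (y - h))\<^sup>2)"
    using real_le_rsqrt[OF le] by (simp add: norm_minus_commute)
  then have "(\<lambda>n. z n - h) \<longlonglongrightarrow> 0"
    by (rule Lim_null_comparison[OF always_eventually lim])
  then have "z \<longlonglongrightarrow> h"
    by (simp add: LIM_zero_iff)
  then show ?thesis
    unfolding closure_sequential using z by blast
qed

lemma exists_orthogonal_to_two:
  fixes a b :: "'a::euclidean_space"
  assumes "3 \<le> DIM('a)"
  obtains d where "d \<noteq> 0" "inner d a = 0" "inner d b = 0"
proof -
  have "dim {a, b} \<le> card {a, b}"
    by (rule dim_le_card) (auto intro: span_base)
  also have "card {a, b} \<le> 2"
    by (rule order_trans[OF card_insert_le_m1]) auto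
  finally have "dim {a, b} < DIM('a)"
    using assms by simp
  then obtain d where "d \<noteq> 0" "\<And>y. y \<in> span {a, b} \<Longrightarrow> orthogonal d y"
    by (rule orthogonal_to_subspace_exists) blast
  then show thesis
    using that span_base[of _ "{a, b}"] by (auto simp: orthogonal_def)
qed

lemma eq_scaleR_if_orthogonal_complement:
  fixes k v z :: "'a::real_inner"
  assumes "inner v k = 0" "inner k z = 0"
    and "\<And>d. inner d k = 0 \<Longrightarrow> inner d v = 0 \<Longrightarrow> inner d z = 0"
  shows "z = (inner v z / inner v v) *\<^sub>R v"
proof -
  define c where "c = inner v z / inner v v"
  define r where "r = z - c *\<^sub>R v"
  have "inner r k = 0"
    using assms(1,2) by (simp add: r_def inner_diff_left inner_diff_right inner_commute)
  moreover have "inner r v = 0"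
    by (cases "v = 0") (simp_all add: r_def c_def inner_diff_left inner_diff_right inner_commute)
  ultimately have "inner r z = 0"
    using assms(3) by blast
  have "inner r r = inner r z - c * inner r v"
    by (simp add: r_def inner_diff_right)
  with \<open>inner r z = 0\<close> \<open>inner r v = 0\<close> have "r = 0"
    by simp
  then show ?thesis
    by (simp add: r_def c_def)
qed

section \<open>Feasible directions at boundary points of smooth cones\<close>

definition feasible_directions :: "'a::real_vector set \<Rightarrow> 'a \<Rightarrow> 'a set" where
  "feasible_directions S x = {d. \<exists>t>0. x + t *\<^sub>R d \<in> S}"

lemma convex_segment_from_point:
  assumes "convex S" "x \<in> S" "x + t *\<^sub>R d \<in> S" "0 < s" "s \<le> t"
  shows "x + s *\<^sub>R d \<in> S"
proof -
  have "(1 - s / t) *\<^sub>R x + (s / t) *\<^sub>R (x + t *\<^sub>R d) \<in> S"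
    using assms by (intro convexD) (auto simp: field_simps)
  also have "(1 - s / t) *\<^sub>R x + (s / t) *\<^sub>R (x + t *\<^sub>R d) = x + s *\<^sub>R d"
    using assms(4,5) by (simp add: algebra_simps)
  finally show ?thesis .
qed

lemma convex_cone_feasible_directions:
  assumes "convex S" "x \<in> S"
  shows "convex_cone (feasible_directions S x)"
  unfolding convex_cone_iff
proof (intro conjI ballI allI impI)
  show "0 \<in> feasible_directions S x"
    using assms(2) by (auto simp: feasible_directions_def intro: exI[of _ 1])
next
  fix d e assume "d \<in> feasible_directions S x" "e \<in> feasible_directions S x"
  then obtain t1 t2 where "t1 > 0" "x + t1 *\<^sub>R d \<in> S" "t2 > 0" "x + t2 *\<^sub>R e \<in> S"
    by (auto simp: feasible_directions_def)
  define t where "t = min t1 t2"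
  have "t > 0" "x + t *\<^sub>R d \<in> S" "x + t *\<^sub>R e \<in> S"
    using convex_segment_from_point[OF assms] \<open>t1 > 0\<close> \<open>t2 > 0\<close> \<open>x + t1 *\<^sub>R d \<in> S\<close> \<open>x + t2 *\<^sub>R e \<in> S\<close>
    by (auto simp: t_def)
  then have "(1 / 2) *\<^sub>R (x + t *\<^sub>R d) + (1 / 2) *\<^sub>R (x + t *\<^sub>R e) \<in> S"
    using assms(1) by (intro convexD) auto
  moreover have "(1 / 2) *\<^sub>R (x + t *\<^sub>R d) + (1 / 2) *\<^sub>R (x + t *\<^sub>R e)
      = (1 / 2 + 1 / 2) *\<^sub>R x + (t / 2) *\<^sub>R (d + e)"
    by (simp only: scaleR_add_left scaleR_add_right scaleR_scaleR) (simp add: algebra_simps)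
  ultimately show "d + e \<in> feasible_directions S x"
    using \<open>t > 0\<close> unfolding feasible_directions_def by (auto intro!: exI[of _ "t / 2"])
next
  fix d and c :: real assume "d \<in> feasible_directions S x" "0 \<le> c"
  then obtain t where "t > 0" "x + t *\<^sub>R d \<in> S"
    by (auto simp: feasible_directions_def)
  show "c *\<^sub>R d \<in> feasible_directions S x"
  proof (cases "c = 0")
    case True
    then show ?thesis
      using assms(2) by (auto simp: feasible_directions_def intro: exI[of _ 1])
  next
    case False
    then have "x + (t / c) *\<^sub>R (c *\<^sub>R d) \<in> S" "t / c > 0"
      using \<open>0 \<le> c\<close> \<open>t > 0\<close> \<open>x + t *\<^sub>R d \<in> S\<close> by auto
    then show ?thesis
      by (auto simp: feasible_directions_def)
  qed
qed

lemma convex_cone_separation: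
  fixes C :: "'a::euclidean_space set"
  assumes "convex_cone C" "d \<notin> closure C"
  obtains a where "inner a d < 0" "\<And>y. y \<in> C \<Longrightarrow> 0 \<le> inner a y"
proof -
  have "convex C"
    using assms(1) by (simp add: convex_cone_def)
  obtain a b where ab: "inner a d < b" "\<And>y. y \<in> closure C \<Longrightarrow> b < inner a y"
    using separating_hyperplane_closed_point[OF convex_closure[OF \<open>convex C\<close>] closed_closure assms(2)]
    by blast
  have "b < 0"
    using ab(2)[of 0] convex_cone_contains_0[OF assms(1)] closure_subset by force
  have "0 \<le> inner a y" if "y \<in> C" for y
  proof (rule ccontr)
    assume "\<not> 0 \<le> inner a y"
    then have "(b / inner a y) *\<^sub>R y \<in> C"
      using \<open>b < 0\<close> \<open>y \<in> C\<close> assms(1) convex_cone_iff by (metis divide_neg_neg less_eq_real_def not_le)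
    then have "b < inner a ((b / inner a y) *\<^sub>R y)"
      using ab(2) closure_subset by blast
    with \<open>\<not> 0 \<le> inner a y\<close> show False
      by simp
  qed
  then show thesis
    using that \<open>inner a d < b\<close> \<open>b < 0\<close> by force
qed

lemma smooth_cone_supporting_hyperplane:
  assumes "smooth_cone K" "x \<in> frontier K" "x \<noteq> 0"
  obtains u where "supporting_hyperplane K u" "inner u x = 0"
  using assms unfolding smooth_cone_def by blast

lemma smooth_cone_supporting_hyperplane_unique:
  assumes "smooth_cone K" "x \<in> frontier K" "x \<noteq> 0"
    and "supporting_hyperplane K u" "inner u x = 0"
    and "supporting_hyperplane K w" "inner w x = 0"
  shows "{z. inner u z = 0} = {z. inner w z = 0}"
proof -
  have "\<exists>!H. \<exists>u. supporting_hyperplane K u \<and> H = {z. inner u z = 0} \<and> x \<in> H"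
    using assms(1-3) unfolding smooth_cone_def by blast
  then show ?thesis
    using assms(4-7) by blast
qed

lemma smooth_cone_tangent_hyperplane:
  fixes K :: "'a::euclidean_space set"
  assumes "smooth_cone K" "x \<in> frontier K" "x \<noteq> 0" "supporting_hyperplane K u" "inner u x = 0"
  shows "{d. inner u d = 0} \<subseteq> closure (feasible_directions K x)"
proof
  fix d assume "d \<in> {d. inner u d = 0}"
  show "d \<in> closure (feasible_directions K x)"
  proof (rule ccontr)
    have K: "closed K" "convex K" "conic K" "0 \<in> K"
      using proper_coneD[OF smooth_cone_imp_proper_cone[OF assms(1)]] by auto
    have "x \<in> K"
      using assms(2) K(1) frontier_subset_closed by blast
    assume "d \<notin> closure (feasible_directions K x)"
    then obtain a where "inner a d < 0" and a: "\<And>y. y \<in> feasible_directions K x \<Longrightarrow> 0 \<le> inner a y"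
      using convex_cone_separation[OF convex_cone_feasible_directions[OF K(2) \<open>x \<in> K\<close>]] by blast
    have FD: "y \<in> feasible_directions K x" if "x + y \<in> K" for y
      unfolding feasible_directions_def using that by (intro CollectI exI[of _ 1]) simp
    have "x + x \<in> K"
      using conicD[OF K(3) \<open>x \<in> K\<close>, of 2] by (simp add: scaleR_2)
    then have "0 \<le> inner a x"
      using a FD by blast
    moreover have "0 \<le> inner a (- x)"
      using a[OF FD[of "- x"]] K(4) by simp
    ultimately have "inner a x = 0"
      by simp
    have "0 \<le> inner a (k - x)" if "k \<in> K" for k
      using a[OF FD[of "k - x"]] that by simp
    then have "supporting_hyperplane K (- a)"
      using \<open>inner a d < 0\<close> \<open>inner a x = 0\<close>
      by (auto simp: supporting_hyperplane_def inner_diff_right)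
    then have "{z. inner (- a) z = 0} = {z. inner u z = 0}"
      using \<open>inner a x = 0\<close> by (intro smooth_cone_supporting_hyperplane_unique[OF assms(1-3)]) (simp_all add: assms)
    then have "d \<in> {z. inner (- a) z = 0}"
      using \<open>d \<in> {d. inner u d = 0}\<close> by blast
    with \<open>inner a d < 0\<close> show False
      by simp
  qed
qed

lemma self_dual_smooth_orthogonal_frontier_point:
  fixes K :: "'a::euclidean_space set"
  assumes "self_dual K" "smooth_cone K" "p \<in> frontier K" "p \<noteq> 0"
  obtains x where "x \<in> frontier K" "x \<noteq> 0" "inner p x = 0"
proof -
  obtain u where u: "supporting_hyperplane K u" "inner u p = 0"
    using smooth_cone_supporting_hyperplane[OF assms(2-4)] .
  have "closed K"
    using proper_coneD(1)[OF smooth_cone_imp_proper_cone[OF assms(2)]] .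
  then have "p \<in> K"
    using assms(3) frontier_subset_closed by blast
  then have "p \<in> dual_cone K"
    using self_dual_mem_iff[OF assms(1), of p] unfolding dual_cone_def by blast
  have "\<forall>y\<in>K. 0 \<le> inner y (- u)"
    using u(1) by (auto simp: supporting_hyperplane_def inner_commute)
  then have "- u \<in> K"
    using self_dual_mem_iff[OF assms(1)] by blast
  moreover have "- u \<notin> interior K"
  proof
    assume "- u \<in> interior K"
    then have "0 < inner p (- u)"
      using inner_pos_if_interior_dual_cone[OF _ \<open>p \<in> dual_cone K\<close> assms(4)] by blast
    with u(2) show False
      by (simp add: inner_commute[of p u])
  qed
  ultimately have "- u \<in> frontier K"
    using closure_subset by (auto simp: frontier_def)
  moreover have "- u \<noteq> 0" "inner p (- u) = 0"
    using u by (auto simp: supporting_hyperplane_def inner_commute[of p u])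
  ultimately show thesis
    using that by blast
qed

lemma self_dual_smooth_tangent_hyperplane:
  fixes K :: "'a::euclidean_space set"
  assumes "self_dual K" "smooth_cone K" "p \<in> frontier K" "p \<noteq> 0"
    and "x \<in> frontier K" "x \<noteq> 0" "inner p x = 0"
  shows "{d. inner p d = 0} \<subseteq> closure (feasible_directions K x)"
proof -
  have "p \<in> K"
    using assms(3) frontier_subset_closed proper_coneD(1)[OF smooth_cone_imp_proper_cone[OF assms(2)]]
    by blast
  then have "\<forall>k\<in>K. 0 \<le> inner k p"
    using self_dual_mem_iff[OF assms(1)] by blast
  then have "supporting_hyperplane K (- p)"
    using assms(4) by (auto simp: supporting_hyperplane_def inner_commute)
  then have "{d. inner (- p) d = 0} \<subseteq> closure (feasible_directions K x)"
    using assms(7) by (intro smooth_cone_tangent_hyperplane[OF assms(2,5,6)]) simp_all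
  then show ?thesis
    by simp
qed

section \<open>Cones making \<open>K\<close> an isotone projection set\<close>

locale isotone_projection_cones =
  fixes K L :: "'a::euclidean_space set"
  assumes self_dual: "self_dual K" and smooth: "smooth_cone K"
    and proper_L: "proper_cone L" and isotone: "isotone_projection_set L K"
begin

lemma proper_K: "proper_cone K"
  using smooth by (rule smooth_cone_imp_proper_cone)

lemma inner_nonneg: "x \<in> K \<Longrightarrow> y \<in> K \<Longrightarrow> 0 \<le> inner x y"
  using self_dual_mem_iff[OF self_dual] by blast

lemma difference_quotient_mem:
  assumes "x \<in> K" "p \<in> K" "inner p x = 0" "l \<in> L" "0 \<le> c" "0 < t"
  shows "(1 / t) *\<^sub>R (closest_point K (x + t *\<^sub>R (l - c *\<^sub>R p)) - x) \<in> L"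
proof -
  have "inner p x \<le> inner p z" if "z \<in> K" for z
    using assms(3) inner_nonneg[OF assms(2) that] by simp
  then have "closest_point K (x - (t * c) *\<^sub>R p) = x"
    using proper_coneD(1,2)[OF proper_K] assms(1,5,6)
    by (intro closest_point_diff_normal) auto
  moreover have "(x + t *\<^sub>R (l - c *\<^sub>R p)) - (x - (t * c) *\<^sub>R p) \<in> L"
    using conicD[OF proper_coneD(3)[OF proper_L] assms(4), of t] assms(6)
    by (simp add: algebra_simps)
  ultimately have "closest_point K (x + t *\<^sub>R (l - c *\<^sub>R p)) - x \<in> L"
    using isotone unfolding isotone_projection_set_def by metis
  then show ?thesis
    using conicD[OF proper_coneD(3)[OF proper_L]] assms(6) by simp
qed

lemma rescaled_projection_mem:
  assumes "x \<in> K" "p \<in> K" "inner p x = 0" "l \<in> L" "0 \<le> c" "w \<in> feasible_directions K x"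
  obtains z where "z \<in> L" "0 \<le> inner p z" "norm (l - c *\<^sub>R p - z) \<le> norm (l - c *\<^sub>R p - w)"
proof -
  obtain t where "0 < t" "x + t *\<^sub>R w \<in> K"
    using assms(6) by (auto simp: feasible_directions_def)
  define q where "q = closest_point K (x + t *\<^sub>R (l - c *\<^sub>R p))"
  define z where "z = (1 / t) *\<^sub>R (q - x)"
  have "closed K"
    using proper_coneD(1)[OF proper_K] .
  have "z \<in> L"
    using difference_quotient_mem[OF assms(1-5) \<open>0 < t\<close>] by (simp add: z_def q_def)
  moreover have "q \<in> K"
    unfolding q_def using \<open>closed K\<close> assms(1) closest_point_in_set by blast
  then have "0 \<le> inner p z"
    using inner_nonneg[OF assms(2)] assms(3) \<open>0 < t\<close> by (simp add: z_def inner_diff_right)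
  moreover have "norm (l - c *\<^sub>R p - z) \<le> norm (l - c *\<^sub>R p - w)"
    using closest_point_rescaled_le[OF \<open>closed K\<close> \<open>x + t *\<^sub>R w \<in> K\<close> \<open>0 < t\<close>] by (simp add: z_def q_def)
  ultimately show thesis
    by (rule that)
qed

lemma frontier_orthogonal_projection_mem:
  assumes "p \<in> frontier K" "p \<noteq> 0" "l \<in> L"
  shows "l - (inner p l / inner p p) *\<^sub>R p \<in> L"
proof -
  have "p \<in> K"
    using assms(1) frontier_subset_closed proper_coneD(1)[OF proper_K] by blast
  obtain x where x: "x \<in> frontier K" "x \<noteq> 0" "inner p x = 0"
    using self_dual_smooth_orthogonal_frontier_point[OF self_dual smooth assms(1,2)] .
  have "x \<in> K"
    using x(1) frontier_subset_closed proper_coneD(1)[OF proper_K] by blast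
  define h where "h = l - (inner p l / inner p p) *\<^sub>R p"
  have "inner p h = 0"
    using assms(2) by (simp add: h_def inner_diff_right)
  then have h_tangent: "h \<in> closure (feasible_directions K x)"
    using self_dual_smooth_tangent_hyperplane[OF self_dual smooth assms(1,2) x] by blast
  \<comment> \<open>\<open>c \<ge> 0\<close> for isotonicity, and \<open>a \<ge> 0\<close> puts \<open>l - c p\<close> on the side of \<open>p\<^sup>\<bottom>\<close> away from \<open>K\<close>\<close>
  define c where "c = max 0 (inner p l / inner p p)"
  define a where "a = c - inner p l / inner p p"
  have "0 \<le> c" "0 \<le> a"
    by (simp_all add: c_def a_def)
  have y: "l - c *\<^sub>R p = h - a *\<^sub>R p"
    by (simp add: h_def a_def algebra_simps)
  have "h \<in> closure L"
  proof (rule mem_closure_if_dominated[OF h_tangent, where y = "h - a *\<^sub>R p"])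
    fix w assume "w \<in> feasible_directions K x"
    then obtain z where "z \<in> L" "0 \<le> inner p z" "norm (h - a *\<^sub>R p - z) \<le> norm (h - a *\<^sub>R p - w)"
      using rescaled_projection_mem[OF \<open>x \<in> K\<close> \<open>p \<in> K\<close> x(3) assms(3) \<open>0 \<le> c\<close>] unfolding y by blast
    have "(norm (h - z))\<^sup>2 + (norm (a *\<^sub>R p))\<^sup>2 \<le> (norm (h - a *\<^sub>R p - z))\<^sup>2"
      using norm_diff_sq_le_halfspace[OF \<open>inner p h = 0\<close> \<open>0 \<le> a\<close> \<open>0 \<le> inner p z\<close>] .
    also have "\<dots> \<le> (norm (h - a *\<^sub>R p - w))\<^sup>2"
      using \<open>norm (h - a *\<^sub>R p - z) \<le> norm (h - a *\<^sub>R p - w)\<close> by (simp add: power_mono)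
    finally show "\<exists>z\<in>L. (norm (h - z))\<^sup>2 + (norm (h - a *\<^sub>R p - h))\<^sup>2 \<le> (norm (h - a *\<^sub>R p - w))\<^sup>2"
      using \<open>z \<in> L\<close> by auto
  qed
  then show ?thesis
    using proper_coneD(1)[OF proper_L] by (simp add: h_def)
qed

lemma closest_point_slice_orthogonal_frontier:
  assumes "L \<inter> {z. inner v z = b} \<noteq> {}" "w \<in> frontier K" "w \<noteq> 0" "inner v w = 0"
  shows "inner w (closest_point (L \<inter> {z. inner v z = b}) 0) = 0"
proof -
  define A where "A = L \<inter> {z. inner v z = b}"
  define z where "z = closest_point A 0"
  have "closed A"
    unfolding A_def using proper_coneD(1)[OF proper_L] by (intro closed_Int closed_hyperplane)
  then have "z \<in> A"
    unfolding z_def using closest_point_in_set assms(1) A_def by blast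
  then have "z - (inner w z / inner w w) *\<^sub>R w \<in> A"
    using frontier_orthogonal_projection_mem[OF assms(2,3)] assms(4)
    by (simp add: A_def inner_diff_right)
  then show ?thesis
    using min_norm_point_orthogonal[OF \<open>closed A\<close>] by (simp add: A_def z_def)
qed

lemma mem_if_orthogonal_to_interior:
  assumes "3 \<le> DIM('a)" "k \<in> interior K" "k \<noteq> 0"
    and "inner v k = 0" "l \<in> L" "0 < inner v l"
  shows "v \<in> L"
proof -
  define A where "A = L \<inter> {z. inner v z = inner v l}"
  define z where "z = closest_point A 0"
  have "closed A"
    unfolding A_def using proper_coneD(1)[OF proper_L] by (intro closed_Int closed_hyperplane)
  moreover have "l \<in> A"
    using assms(5) by (simp add: A_def)
  ultimately have "z \<in> A"
    unfolding z_def using closest_point_in_set by blast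
  then have "z \<in> L" "inner v z = inner v l"
    by (simp_all add: A_def)
  have plane_perp: "inner k z = 0 \<and> inner d z = 0" if "d \<noteq> 0" "inner d k = 0" "inner v d = 0" for d
  proof -
    have "inner (k + t *\<^sub>R d) z = 0" if "k + t *\<^sub>R d \<in> frontier K" for t
      unfolding z_def A_def
    proof (rule closest_point_slice_orthogonal_frontier[OF _ that])
      show "L \<inter> {z. inner v z = inner v l} \<noteq> {}"
        using \<open>l \<in> A\<close> A_def by blast
      have "inner (k + t *\<^sub>R d) k = inner k k"
        using \<open>inner d k = 0\<close> by (simp add: inner_add_left)
      then show "k + t *\<^sub>R d \<noteq> 0"
        using assms(3) by auto
      show "inner v (k + t *\<^sub>R d) = 0"
        using assms(4) \<open>inner v d = 0\<close> by (simp add: inner_add_right inner_commute)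
    qed
    then show ?thesis
      using self_dual_orthogonal_if_orthogonal_line_exits[OF self_dual assms(2) that(1,2)] by blast
  qed
  obtain e where "e \<noteq> 0" "inner e k = 0" "inner e v = 0"
    using exists_orthogonal_to_two[OF assms(1)] .
  then have "inner k z = 0"
    using plane_perp by (simp add: inner_commute)
  define c where "c = inner v z / inner v v"
  have "inner d z = 0" if "inner d k = 0" "inner d v = 0" for d
    using plane_perp[of d] that by (cases "d = 0") (auto simp: inner_commute)
  then have "z = c *\<^sub>R v"
    unfolding c_def by (rule eq_scaleR_if_orthogonal_complement[OF assms(4) \<open>inner k z = 0\<close>])
  moreover have "v \<noteq> 0"
    using assms(6) by auto
  then have "0 < c"
    using assms(6) \<open>inner v z = inner v l\<close> by (simp add: c_def)
  ultimately have "v = (1 / c) *\<^sub>R z"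
    by simp
  then show ?thesis
    using conicD[OF proper_coneD(3)[OF proper_L] \<open>z \<in> L\<close>] \<open>0 < c\<close> by simp
qed

lemma orthogonal_to_interior_mem_or_uminus_mem:
  assumes "3 \<le> DIM('a)" "k \<in> interior K" "k \<noteq> 0" "g \<noteq> 0" "inner g k = 0"
  shows "g \<in> L \<or> - g \<in> L"
proof -
  obtain a b where "a \<in> L" "b \<in> L" "g = a - b"
    using proper_coneD(6)[OF proper_L] by blast
  have "inner g g = inner g (a - b)"
    using \<open>g = a - b\<close> by simp
  then have "inner g g = inner g a + inner (- g) b"
    by (simp add: inner_diff_right)
  then have "0 < inner g a \<or> 0 < inner (- g) b"
    using assms(4) by (smt (verit) inner_gt_zero_iff)
  then show ?thesis
    using mem_if_orthogonal_to_interior[OF assms(1-3)] assms(5) \<open>a \<in> L\<close> \<open>b \<in> L\<close> by force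
qed

end

theorem proposition1:
  fixes K :: "'a::euclidean_space set"
  assumes "DIM('a) \<ge> 3"
    and "proper_cone K" and "self_dual K" and "smooth_cone K" and "strictly_convex_cone K"
  shows "\<not> (\<exists>L::'a set. proper_cone L \<and> isotone_projection_set L K)"
  \<comment> \<open>the last assumption is implied by \<open>smooth_cone K\<close>\<close>
proof
  assume "\<exists>L::'a set. proper_cone L \<and> isotone_projection_set L K"
  then obtain L where "isotone_projection_cones K L"
    using assms(3,4) by (auto intro: isotone_projection_cones.intro)
  then interpret isotone_projection_cones K L .
  obtain k where k: "k \<in> interior K" "k \<noteq> 0"
    using proper_cone_interior_nonzero[OF assms(2)] .
  obtain e where e: "e \<noteq> 0" "inner e k = 0"
    using exists_orthogonal_to_two[OF assms(1), of k k] by blast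
  obtain f where f: "f \<noteq> 0" "inner f k = 0" "inner f e = 0"
    using exists_orthogonal_to_two[OF assms(1), of k e] by blast
  obtain e' where e': "e' \<in> L" "e' = e \<or> e' = - e"
    using orthogonal_to_interior_mem_or_uminus_mem[OF assms(1) k e] by blast
  obtain f' where f': "f' \<in> L" "f' = f \<or> f' = - f"
    using orthogonal_to_interior_mem_or_uminus_mem[OF assms(1) k f(1,2)] by blast
  define v where "v = e' - f'"
  have "inner e' f' = 0" "inner v k = 0"
    using e e' f f' by (auto simp: v_def inner_diff_left inner_diff_right inner_commute)
  then have "inner v e' = inner e' e'" "inner (- v) f' = inner f' f'"
    by (simp_all add: v_def inner_diff_left inner_diff_right inner_commute)
  moreover have "0 < inner e' e'" "0 < inner f' f'"
    using e e' f f' by auto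
  ultimately have "v \<in> L" "- v \<in> L"
    using mem_if_orthogonal_to_interior[OF assms(1) k] \<open>inner v k = 0\<close> e' f' by auto
  then have "v = 0"
    by (rule proper_coneD(5)[OF proper_L])
  with \<open>inner v e' = inner e' e'\<close> \<open>0 < inner e' e'\<close> show False
    by simp
qed

end
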